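(* Let $t\in\mathbb{R}\setminus\{2\}$ (when $t>2$, all matrices and vectors involved are assumed to have strictly positive entries), $\varepsilon\ge 0$, $\tilde r,\tilde c\in\tilde\Delta_n$. For any $\tilde P,\tilde Q\in\tilde U_n^{\varepsilon}(\tilde r,\tilde c)$ and any $\beta\in[0,1]$, $$\big(\beta\,\tilde P^{1/t^*}+(1-\beta)\,\tilde Q^{1/t^*}\big)^{t^*}\in\tilde U_n^{\varepsilon}(\tilde r,\tilde c).$$
   Context: $t^*=1/(2-t)$; powers of vectors/matrices are entrywise. For $s\neq1$, $\log_s(z)=(z^{1-s}-1)/(1-s)$; $\log_1=\log$ and $\log_0(z)=z-1$. Co-simplex: $\tilde\Delta_n=\{\tilde p\in\mathbb{R}^n:\tilde p\ge0,\ \sum_i\tilde p_i^{1/t^*}=1\}$. Co-polytope: $\tilde U_n(\tilde r,\tilde c)=\{\tilde P\in\mathbb{R}^{n\times n}_{\ge0}:\sum_j\tilde P_{ij}^{1/t^*}=\tilde r_i^{1/t^*}\ \forall i,\ \sum_i\tilde P_{ij}^{1/t^*}=\tilde c_j^{1/t^*}\ \forall j\}$. Tempered relative entropy: $D_t(\tilde u\|\tilde v)=\sum_k[\tilde u_k(\log_t\tilde u_k-\log_t\tilde v_k)-\log_{t-1}\tilde u_k+\log_{t-1}\tilde v_k]$ (sum over all entries). Ball: $\tilde U_n^{\varepsilon}(\tilde r,\tilde c)=\{\tilde P\in\tilde U_n(\tilde r,\tilde c): D_t(\tilde P\|\tilde r\tilde c^\top)\le\varepsilon\}$. *)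

theory Defs
  imports Complex_Main
begin

definition tstar :: "real \<Rightarrow> real" where
  "tstar t = 1 / (2 - t)"

definition logt :: "real \<Rightarrow> real \<Rightarrow> real" where
  "logt s z = (if s = 1 then ln z else (z powr (1 - s) - 1) / (1 - s))"

definition co_simplex :: "real \<Rightarrow> ('n::finite \<Rightarrow> real) set" where
  "co_simplex t = {p. (\<forall>i. p i \<ge> 0) \<and> (\<Sum>i\<in>UNIV. p i powr (1 / tstar t)) = 1}"

definition co_polytope :: "real \<Rightarrow> ('n::finite \<Rightarrow> real) \<Rightarrow> ('n \<Rightarrow> real)
    \<Rightarrow> ('n \<Rightarrow> 'n \<Rightarrow> real) set" where
  "co_polytope t r c = {P. (\<forall>i j. P i j \<ge> 0)
     \<and> (\<forall>i. (\<Sum>j\<in>UNIV. P i j powr (1 / tstar t)) = r i powr (1 / tstar t))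
     \<and> (\<forall>j. (\<Sum>i\<in>UNIV. P i j powr (1 / tstar t)) = c j powr (1 / tstar t))}"

definition tempered_rel_entropy :: "real \<Rightarrow> ('n::finite \<Rightarrow> 'n \<Rightarrow> real)
    \<Rightarrow> ('n \<Rightarrow> 'n \<Rightarrow> real) \<Rightarrow> real" where
  "tempered_rel_entropy t U V = (\<Sum>i\<in>UNIV. \<Sum>j\<in>UNIV.
      U i j * (logt t (U i j) - logt t (V i j))
      - logt (t - 1) (U i j) + logt (t - 1) (V i j))"

definition co_polytope_ball :: "real \<Rightarrow> real \<Rightarrow> ('n::finite \<Rightarrow> real) \<Rightarrow> ('n \<Rightarrow> real)
    \<Rightarrow> ('n \<Rightarrow> 'n \<Rightarrow> real) set" where
  "co_polytope_ball t \<epsilon> r c = {P \<in> co_polytope t r c.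
      tempered_rel_entropy t P (\<lambda>i j. r i * c j) \<le> \<epsilon>}"

end

theory Submission
  imports Defs "HOL-Analysis.Analysis"
begin

text \<open>In the co-coordinates \<open>w = P powr (1/t*)\<close> the marginal constraints of the co-polytope
are linear and the co-mixture is an ordinary convex combination, so the co-polytope is preserved.
Read in co-coordinates, the tempered relative entropy is a sum of one-variable functions
\<open>w \<mapsto> a w + b - v powr (1 - t) / (1 - t) * w powr t*\<close> (for \<open>t = 1\<close>: \<open>w ln w\<close> plus an affine term).
Each of them is convex, because \<open>w powr t*\<close> is concave for \<open>t < 1\<close> and convex for \<open>t > 1\<close>,
exactly compensating the sign of \<open>1 - t\<close>. Hence the entropy of the co-mixture is at most
\<open>\<beta> \<epsilon> + (1 - \<beta>) \<epsilon> = \<epsilon>\<close>.\<close>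

lemma powr_tendsto_at_right_0:
  assumes "0 < p"
  shows "((\<lambda>x::real. x powr p) \<longlongrightarrow> 0 powr p) (at_right 0)"
proof -
  have "\<forall>\<^sub>F x::real in at_right 0. 0 \<le> x"
    using eventually_at_right_less[of "0::real"] by eventually_elim simp
  then have "((\<lambda>x::real. x powr p) \<longlongrightarrow> 0) (at_right 0)"
    using assms by (intro tendsto_zero_powrI tendsto_ident_at) auto
  then show ?thesis by simp
qed

lemma x_ln_x_tendsto_0: "((\<lambda>x::real. x * ln x) \<longlongrightarrow> 0) (at_right 0)"
proof -
  have "((\<lambda>x. ln (inverse x) / inverse x) \<longlongrightarrow> 0) (at_right (0::real))"
    by (rule filterlim_compose[OF ln_x_over_x_tendsto_0 filterlim_inverse_at_top_right])
  then have "((\<lambda>x. - (ln (inverse x) / inverse x)) \<longlongrightarrow> 0) (at_right (0::real))"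
    by (intro tendsto_minus_cancel_left[THEN iffD1]) simp
  then show ?thesis
  proof (rule tendsto_cong[THEN iffD1, rotated])
    show "\<forall>\<^sub>F x::real in at_right 0. - (ln (inverse x) / inverse x) = x * ln x"
      using eventually_at_right_less[of "0::real"] by eventually_elim 
      (simp add: ln_inverse divide_inverse)
  qed
qed

lemma convex_on_atLeast_0:
  fixes f :: "real \<Rightarrow> real"
  assumes convex: "convex_on {0<..} f" and right_cont: "(f \<longlongrightarrow> f 0) (at_right 0)"
  shows "convex_on {0..} f"
proof (rule convex_on_linorderI)
  fix u x y :: real
  assume u: "0 < u" "u < 1" and xy: "x \<in> {0..}" "y \<in> {0..}" "x < y"
  show "f ((1 - u) *\<^sub>R x + u *\<^sub>R y) \<le> (1 - u) * f x + u * f y"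
  proof (cases "x = 0")
    case False
    then show ?thesis using convex_onD[OF convex, of u x y] u xy by auto
  next
    case True
    have "0 < y" using xy True by simp
    have "((\<lambda>e. f ((1 - u) * e + u * y)) \<longlongrightarrow> f (u * y)) (at_right 0)"
    proof (rule continuous_on_tendsto_compose[OF convex_on_continuous[OF _ convex]])
      show "((\<lambda>e. (1 - u) * e + u * y) \<longlongrightarrow> u * y) (at_right 0)"
        by (auto intro!: tendsto_eq_intros)
      show "\<forall>\<^sub>F e in at_right 0. (1 - u) * e + u * y \<in> {0<..}"
        by (rule eventually_mono[OF eventually_at_right_less[of 0]])
           (use u \<open>0 < y\<close> in \<open>auto intro!: add_nonneg_pos\<close>)
    qed (use u \<open>0 < y\<close> in auto)
    moreover have "((\<lambda>e. (1 - u) * f e + u * f y) \<longlongrightarrow> (1 - u) * f 0 + u * f y) (at_right 0)"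
      by (intro tendsto_intros right_cont)
    moreover have "\<forall>\<^sub>F e in at_right 0. f ((1 - u) * e + u * y) \<le> (1 - u) * f e + u * f y"
      using eventually_at_right_less[of 0]
    proof eventually_elim
      case (elim e)
      then show ?case using convex_onD[OF convex, of u e y] u \<open>0 < y\<close> by auto
    qed
    ultimately show ?thesis using True by (simp add: tendsto_le[OF trivial_limit_at_right_real])
  qed
qed (rule convex_real_interval)

lemma convex_on_affine_add:
  fixes a b :: real
  assumes "convex_on S g" and "\<And>x. x \<in> S \<Longrightarrow> f x = a * x + b + g x"
  shows "convex_on S f"
proof -
  have "convex_on S (\<lambda>x. a * x + b)"
    using convex_on_imp_convex[OF assms(1)]
    by (auto simp: convex_on_def algebra_simps simp flip: distrib_left distrib_right)
  then have "convex_on S (\<lambda>x. a * x + b + g x)"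
    using assms(1) by (rule convex_on_add)
  then show ?thesis
    using assms(2) convex_on_imp_convex[OF assms(1)] by (auto simp: convex_on_def convex_def)
qed

lemma powr_concave_atLeast_0:
  assumes "0 < p" "p \<le> 1"
  shows "concave_on {0..} (\<lambda>x::real. x powr p)"
  unfolding concave_on_def
proof (rule convex_on_atLeast_0)
  have "concave_on {0<..} (\<lambda>x::real. x powr p)"
  proof (rule f''_le0_imp_concave[where f' = "\<lambda>x. p * x powr (p - 1)"
        and f'' = "\<lambda>x. p * ((p - 1) * x powr (p - 1 - 1))"])
    fix x :: real assume "x \<in> {0<..}"
    then show "DERIV (\<lambda>x. x powr p) x :> p * x powr (p - 1)"
      and "DERIV (\<lambda>x. p * x powr (p - 1)) x :> p * ((p - 1) * x powr (p - 1 - 1))"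
      by (auto intro!: derivative_eq_intros)
    show "p * ((p - 1) * x powr (p - 1 - 1)) \<le> 0"
      using assms by (intro mult_nonneg_nonpos mult_nonpos_nonneg) auto
  qed auto
  then show "convex_on {0<..} (\<lambda>x::real. - (x powr p))"
    by (simp add: concave_on_def)
  show "((\<lambda>x::real. - (x powr p)) \<longlongrightarrow> - (0 powr p)) (at_right 0)"
    using assms by (intro tendsto_minus powr_tendsto_at_right_0)
qed

lemma powr_convex_atLeast_0:
  assumes "1 \<le> p"
  shows "convex_on {0..} (\<lambda>x::real. x powr p)"
proof (rule convex_on_atLeast_0)
  show "convex_on {0<..} (\<lambda>x::real. x powr p)"
    using assms by (rule powr_convex)
  show "((\<lambda>x::real. x powr p) \<longlongrightarrow> 0 powr p) (at_right 0)"
    using assms by (intro powr_tendsto_at_right_0) simp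
qed

lemma powr_convex_nonpos:
  assumes "p \<le> 0"
  shows "convex_on {0<..} (\<lambda>x::real. x powr p)"
proof (rule f''_ge0_imp_convex[where f' = "\<lambda>x. p * x powr (p - 1)"
      and f'' = "\<lambda>x. p * ((p - 1) * x powr (p - 1 - 1))"])
  fix x :: real assume "x \<in> {0<..}"
  then show "DERIV (\<lambda>x. x powr p) x :> p * x powr (p - 1)"
    and "DERIV (\<lambda>x. p * x powr (p - 1)) x :> p * ((p - 1) * x powr (p - 1 - 1))"
    by (auto intro!: derivative_eq_intros)
  show "0 \<le> p * ((p - 1) * x powr (p - 1 - 1))"
    using assms by (intro mult_nonpos_nonpos mult_nonpos_nonneg) auto
qed auto

lemma x_ln_x_convex_atLeast_0: "convex_on {0..} (\<lambda>x::real. x * ln x)"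
proof (rule convex_on_atLeast_0)
  show "convex_on {0<..} (\<lambda>x::real. x * ln x)"
  proof (rule f''_ge0_imp_convex[where f' = "\<lambda>x. ln x + 1" and f'' = "\<lambda>x. 1 / x"])
    fix x :: real assume "x \<in> {0<..}"
    then show "DERIV (\<lambda>x. x * ln x) x :> ln x + 1" and "DERIV (\<lambda>x. ln x + 1) x :> 1 / x"
      and "0 \<le> 1 / x"
      by (auto intro!: derivative_eq_intros)
  qed auto
  show "((\<lambda>x::real. x * ln x) \<longlongrightarrow> 0 * ln 0) (at_right 0)"
    using x_ln_x_tendsto_0 by simp
qed

lemma tstar_nonzero: "t \<noteq> 2 \<Longrightarrow> tstar t \<noteq> 0"
  by (simp add: tstar_def)

lemma powr_tstar_powr_inverse:
  assumes "t \<noteq> 2" "0 \<le> x"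
  shows "(x powr tstar t) powr (1 / tstar t) = x"
    and "(x powr (1 / tstar t)) powr tstar t = x"
  using assms tstar_nonzero[OF assms(1)] by (simp_all add: powr_powr powr_one)

text \<open>The summand of \<open>D_t(- \<parallel> v)\<close> at an entry \<open>u\<close>, written in its co-coordinate
\<open>w = u powr (1/t*)\<close>.\<close>

definition tempered_entropy_term :: "real \<Rightarrow> real \<Rightarrow> real \<Rightarrow> real" where
  "tempered_entropy_term t v w = w powr tstar t * (logt t (w powr tstar t) - logt t v)
     - logt (t - 1) (w powr tstar t) + logt (t - 1) v"

lemma tempered_entropy_term_eq:
  assumes "t \<noteq> 1" "t \<noteq> 2" "0 \<le> w"
  shows "tempered_entropy_term t v w = (1 / (1 - t) - 1 / (2 - t)) * w
           + (1 / (2 - t) + logt (t - 1) v) - v powr (1 - t) / (1 - t) * w powr tstar t"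
proof -
  define u where "u = w powr tstar t"
  have uw: "u powr (2 - t) = w"
    using assms by (simp add: u_def powr_powr tstar_def powr_one)
  have "u * u powr (1 - t) = u powr (1 + (1 - t))"
    using powr_ge_zero[of w "tstar t"] by (subst powr_add) (simp add: powr_one flip: u_def)
  then have w: "u * u powr (1 - t) = w"
    using uw by simp
  have logt_t: "logt t x = (x powr (1 - t) - 1) / (1 - t)" for x
    using assms by (simp add: logt_def)
  have logt_u: "logt (t - 1) u = (w - 1) / (2 - t)"
    using assms uw by (simp add: logt_def)
  have "u * (logt t u - logt t v) = (w - u * v powr (1 - t)) / (1 - t)"
    unfolding logt_t w[symmetric] by (simp add: diff_divide_distrib right_diff_distrib)
  then have "tempered_entropy_term t v w
      = (w - u * v powr (1 - t)) / (1 - t) - (w - 1) / (2 - t) + logt (t - 1) v"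
    unfolding tempered_entropy_term_def u_def[symmetric] logt_u by simp
  also have "\<dots> = (1 / (1 - t) - 1 / (2 - t)) * w + (1 / (2 - t) + logt (t - 1) v)
      - v powr (1 - t) / (1 - t) * u"
  proof -
    have "(w - u * V) / D1 - (w - 1) / D2 + L = (1 / D1 - 1 / D2) * w + (1 / D2 + L) - V / D1 * u"
      if "D1 \<noteq> 0" "D2 \<noteq> 0" for D1 D2 V L :: real
      using that by (simp add: field_simps)
    moreover have "1 - t \<noteq> 0" "2 - t \<noteq> 0"
      using assms by auto
    ultimately show ?thesis by blast
  qed
  finally show ?thesis
    by (simp only: u_def)
qed

lemma tempered_entropy_term_1_eq:
  assumes "0 \<le> w"
  shows "tempered_entropy_term 1 v w = (- ln v - 1) * w + (1 + logt 0 v) + w * ln w"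
  using assms by (simp add: tempered_entropy_term_def tstar_def logt_def powr_one algebra_simps)

lemma tempered_entropy_term_convex_below_2:
  assumes "t < 2"
  shows "convex_on {0..} (tempered_entropy_term t v)"
proof (cases "t = 1")
  case True
  then show ?thesis
    by (intro convex_on_affine_add[OF x_ln_x_convex_atLeast_0, of _ "- ln v - 1" "1 + logt 0 v"])
       (simp add: tempered_entropy_term_1_eq)
next
  case False
  define c where "c = v powr (1 - t) / (1 - t)"
  have eq: "tempered_entropy_term t v w = (1 / (1 - t) - 1 / (2 - t)) * w
      + (1 / (2 - t) + logt (t - 1) v) + c * - (w powr tstar t)" if "w \<in> {0..}" for w
    using that tempered_entropy_term_eq[OF False _, of w v] assms by (simp add: c_def)
  consider "t < 1" | "1 < t"
    using False by linarith
  then have "convex_on {0..} (\<lambda>w. c * - (w powr tstar t))"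
  proof cases
    case 1
    then have "0 < tstar t" "tstar t \<le> 1" "0 \<le> c"
      by (simp_all add: tstar_def c_def)
    then show ?thesis
      by (intro convex_on_cmul) (simp_all add: powr_concave_atLeast_0 flip: concave_on_def)
  next
    case 2
    then have "1 \<le> tstar t" "c \<le> 0"
      using assms by (simp_all add: tstar_def c_def divide_nonneg_neg)
    then have "convex_on {0..} (\<lambda>w. - c * w powr tstar t)"
      by (intro convex_on_cmul powr_convex_atLeast_0) simp_all
    then show ?thesis
      by simp
  qed
  then show ?thesis
    by (rule convex_on_affine_add) (rule eq)
qed

text \<open>For \<open>t > 2\<close> the exponent \<open>t*\<close> is negative, so \<open>0\<close> must be excluded: there
\<open>0 powr t* = 0\<close> is a junk value.\<close>

lemma tempered_entropy_term_convex_above_2: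
  assumes "2 < t"
  shows "convex_on {0<..} (tempered_entropy_term t v)"
proof -
  have "tstar t \<le> 0" "v powr (1 - t) / (1 - t) \<le> 0"
    using assms by (simp_all add: tstar_def divide_nonneg_neg)
  then have "convex_on {0<..} (\<lambda>w. - (v powr (1 - t) / (1 - t)) * w powr tstar t)"
    by (intro convex_on_cmul powr_convex_nonpos) simp_all
  then show ?thesis
    by (rule convex_on_affine_add)
       (use assms tempered_entropy_term_eq[of t _ v] in simp)
qed

definition co_mixture :: "real \<Rightarrow> real \<Rightarrow> ('a \<Rightarrow> 'b \<Rightarrow> real) \<Rightarrow> ('a \<Rightarrow> 'b \<Rightarrow> real)
    \<Rightarrow> 'a \<Rightarrow> 'b \<Rightarrow> real" where
  "co_mixture t \<beta> P Q = (\<lambda>i j. (\<beta> * P i j powr (1 / tstar t) + (1 - \<beta>) * Q i j powr (1 / tstar t))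
      powr tstar t)"

lemma co_mixture_nonneg: "0 \<le> co_mixture t \<beta> P Q i j"
  by (simp add: co_mixture_def)

lemma co_mixture_powr_inverse_tstar:
  assumes "t \<noteq> 2" "0 \<le> \<beta>" "\<beta> \<le> 1"
  shows "co_mixture t \<beta> P Q i j powr (1 / tstar t)
    = \<beta> * P i j powr (1 / tstar t) + (1 - \<beta>) * Q i j powr (1 / tstar t)"
  using assms by (simp add: co_mixture_def powr_tstar_powr_inverse)

lemma co_mixture_in_co_polytope:
  assumes "t \<noteq> 2" "0 \<le> \<beta>" "\<beta> \<le> 1"
    and "P \<in> co_polytope t r c" "Q \<in> co_polytope t r c"
  shows "co_mixture t \<beta> P Q \<in> co_polytope t r c"
proof -
  let ?M = "co_mixture t \<beta> P Q" and ?a = "1 / tstar t"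
  have "(\<Sum>j\<in>UNIV. ?M i j powr ?a)
      = \<beta> * (\<Sum>j\<in>UNIV. P i j powr ?a) + (1 - \<beta>) * (\<Sum>j\<in>UNIV. Q i j powr ?a)"
    and "(\<Sum>i\<in>UNIV. ?M i j powr ?a)
      = \<beta> * (\<Sum>i\<in>UNIV. P i j powr ?a) + (1 - \<beta>) * (\<Sum>i\<in>UNIV. Q i j powr ?a)" for i j
    using assms by (simp_all add: co_mixture_powr_inverse_tstar sum.distrib sum_distrib_left)
  then show ?thesis
    using assms by (simp add: co_polytope_def co_mixture_nonneg algebra_simps)
qed

lemma tempered_rel_entropy_eq_sum_terms:
  assumes "t \<noteq> 2" "\<forall>i j. 0 \<le> P i j"
  shows "tempered_rel_entropy t P V
    = (\<Sum>i\<in>UNIV. \<Sum>j\<in>UNIV. tempered_entropy_term t (V i j) (P i j powr (1 / tstar t)))"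
  using assms by (simp add: tempered_rel_entropy_def tempered_entropy_term_def powr_tstar_powr_inverse)

lemma tempered_rel_entropy_co_mixture_le:
  assumes "t \<noteq> 2" "0 \<le> \<beta>" "\<beta> \<le> 1" "\<forall>i j. 0 \<le> P i j" "\<forall>i j. 0 \<le> Q i j"
    and "2 < t \<longrightarrow> (\<forall>i j. 0 < P i j \<and> 0 < Q i j)"
  shows "tempered_rel_entropy t (co_mixture t \<beta> P Q) V
    \<le> \<beta> * tempered_rel_entropy t P V + (1 - \<beta>) * tempered_rel_entropy t Q V"
proof -
  let ?a = "1 / tstar t"
  obtain S where convex: "\<And>v. convex_on S (tempered_entropy_term t v)"
    and mem: "\<And>i j. P i j powr ?a \<in> S" "\<And>i j. Q i j powr ?a \<in> S"
  proof (cases "t < 2")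
    case True
    then show ?thesis
      using that[of "{0..}"] tempered_entropy_term_convex_below_2 by simp
  next
    case False
    then have "2 < t"
      using assms(1) by simp
    show ?thesis
    proof (rule that)
      show "convex_on {0<..} (tempered_entropy_term t v)" for v
        using \<open>2 < t\<close> by (rule tempered_entropy_term_convex_above_2)
      show "P i j powr ?a \<in> {0<..}" "Q i j powr ?a \<in> {0<..}" for i j
        using \<open>2 < t\<close> assms(6) by (simp_all add: less_imp_neq[THEN not_sym])
    qed
  qed
  have "tempered_entropy_term t v (\<beta> * P i j powr ?a + (1 - \<beta>) * Q i j powr ?a)
      \<le> \<beta> * tempered_entropy_term t v (P i j powr ?a)
        + (1 - \<beta>) * tempered_entropy_term t v (Q i j powr ?a)"
    for v i j
    using convex_onD[OF convex, of "1 - \<beta>" "P i j powr ?a" "Q i j powr ?a"] mem assms(2,3)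
    by (simp add: algebra_simps)
  then show ?thesis
    using assms(1-5)
    by (simp add: tempered_rel_entropy_eq_sum_terms co_mixture_nonneg co_mixture_powr_inverse_tstar
        sum_distrib_left flip: sum.distrib) (intro sum_mono)
qed

theorem proposition2:
  fixes t \<epsilon> \<beta> :: real
    and r c :: "'n::finite \<Rightarrow> real"
    and P Q :: "'n \<Rightarrow> 'n \<Rightarrow> real"
  assumes "t \<noteq> 2"
    and "\<epsilon> \<ge> 0"
    and "r \<in> co_simplex t" and "c \<in> co_simplex t"
    and "P \<in> co_polytope_ball t \<epsilon> r c" and "Q \<in> co_polytope_ball t \<epsilon> r c"
    and "0 \<le> \<beta>" and "\<beta> \<le> 1"
    and "t > 2 \<longrightarrow> (\<forall>i. r i > 0) \<and> (\<forall>j. c j > 0) \<and> (\<forall>i j. P i j > 0 \<and> Q i j > 0)"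
  shows "(\<lambda>i j. (\<beta> * P i j powr (1 / tstar t) + (1 - \<beta>) * Q i j powr (1 / tstar t))
            powr (tstar t)) \<in> co_polytope_ball t \<epsilon> r c"
proof -
  let ?V = "\<lambda>i j. r i * c j" and ?M = "co_mixture t \<beta> P Q"
  have P: "P \<in> co_polytope t r c" "tempered_rel_entropy t P ?V \<le> \<epsilon>"
    and Q: "Q \<in> co_polytope t r c" "tempered_rel_entropy t Q ?V \<le> \<epsilon>"
    using assms(5,6) by (simp_all add: co_polytope_ball_def)
  then have "\<forall>i j. 0 \<le> P i j" "\<forall>i j. 0 \<le> Q i j"
    by (simp_all add: co_polytope_def)
  then have "tempered_rel_entropy t ?M ?V
      \<le> \<beta> * tempered_rel_entropy t P ?V + (1 - \<beta>) * tempered_rel_entropy t Q ?V"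
    using assms(1,7-9) by (intro tempered_rel_entropy_co_mixture_le) auto
  also have "\<dots> \<le> \<beta> * \<epsilon> + (1 - \<beta>) * \<epsilon>"
    using P(2) Q(2) assms(7,8) by (intro add_mono mult_left_mono) auto
  finally have "tempered_rel_entropy t ?M ?V \<le> \<epsilon>"
    by (simp add: algebra_simps)
  moreover have "?M \<in> co_polytope t r c"
    using assms(1,7,8) P(1) Q(1) by (rule co_mixture_in_co_polytope)
  ultimately show ?thesis
    by (simp add: co_polytope_ball_def co_mixture_def)
qed

end
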